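(* Let $A$ be a connectivity class of external positions, all of whose positions $p$ have $|B(p)|=m$ and sorted characteristics $j_1\le\dots\le j_{n-m}$. For $S\subseteq\{1,\dots,n\}$ with $|S|=m$ and $\varepsilon:S\to\{0,k-1\}$ put $Cl(S,\varepsilon)=\{p\in A: B(p)=S,\ p_s=\varepsilon(s)\ \forall s\in S\}$. Then $A$ is the disjoint union of the sets $Cl(S,\varepsilon)$; in the solved coloring, the cubies in two positions of $A$ have the same coloring if and only if the positions lie in the same set $Cl(S,\varepsilon)$. Moreover, if $A$ is not central, every nonempty $Cl(S,\varepsilon)$ contains at least two positions (so is a cluster), while if $A$ is central every nonempty $Cl(S,\varepsilon)$ consists of a single position.
   Context: Fix integers $k\ge 2$, $n\ge 3$, $M=\{0,\dots,k-1\}$. Positions are $p\in M^n$, the cubie at $p$ being $\prod_i[p_i,p_i+1]\subset[0,k]^n$; $B(p)=\{i:p_i\in\{0,k-1\}\}$, $p$ external if $B(p)\ne\emptyset$. For $x\in\{1,\dots,k-2\}$, $\bar x=\min(x,k-1-x)$; the characteristics of $p$ are the values $\bar p_i$, $i\notin B(p)$, sorted non-decreasingly. For distinct $i,j$, $\psi_{i,j}:M^n\to M^n$ is $(\psi_{i,j}p)_i=k-1-p_j$, $(\psi_{i,j}p)_j=p_i$, other coordinates unchanged. A move is given by distinct $i,j$ and constants $c_l\in M$ ($l\notin\{i,j\}$) and applies $\psi_{i,j}$ to all positions $p$ with $p_l=c_l$ ($l\notin\{i,j\}$), fixing the others; a combination is a finite sequence of moves. Connectivity classes are the orbits of external positions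 under combinations (all positions in one class have the same $|B(p)|$ and the same characteristics). A class is central if all its characteristics equal $(k-1)/2$ (vacuously true when $m=n$). Solved coloring: for each $t$ with $2\le t\le n-1$, each $t$-dimensional face $\{x\in[0,k]^n: x_s=e_s\ (s\in S)\}$ ($|S|=n-t$, $e_s\in\{0,k\}$) of the big cube gets its own color, distinct faces getting distinct colors, and each $t$-dimensional face of a cubie contained in a $t$-face of the big cube receives that face's color. Two cubies have the same coloring if the sets of colors on them coincide. A cluster is the set of all cubies of one class having the same coloring, provided it has more than one element. *)

theory Defs
  imports Complex_Main
begin

text \<open>Coordinates are indexed by 0..n-1. A position is a function p :: nat => nat with
  p i < k for i < n and p i = 0 for i >= n (canonical representation of M^n).\<close>

definition positions :: "nat \<Rightarrow> nat \<Rightarrow> (nat \<Rightarrow> nat) set" where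
  "positions k n = {p. (\<forall>i<n. p i < k) \<and> (\<forall>i\<ge>n. p i = 0)}"

definition B :: "nat \<Rightarrow> nat \<Rightarrow> (nat \<Rightarrow> nat) \<Rightarrow> nat set" where
  "B k n p = {i. i < n \<and> (p i = 0 \<or> p i = k - 1)}"

definition external :: "nat \<Rightarrow> nat \<Rightarrow> (nat \<Rightarrow> nat) \<Rightarrow> bool" where
  "external k n p \<longleftrightarrow> B k n p \<noteq> {}"

definition bar :: "nat \<Rightarrow> nat \<Rightarrow> nat" where
  "bar k x = min x (k - 1 - x)"

definition characteristics :: "nat \<Rightarrow> nat \<Rightarrow> (nat \<Rightarrow> nat) \<Rightarrow> nat list" where
  "characteristics k n p = sort (map (\<lambda>i. bar k (p i)) (filter (\<lambda>i. i \<notin> B k n p) [0..<n]))"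

definition psi :: "nat \<Rightarrow> nat \<Rightarrow> nat \<Rightarrow> (nat \<Rightarrow> nat) \<Rightarrow> (nat \<Rightarrow> nat)" where
  "psi k i j p = p(i := k - 1 - p j, j := p i)"

text \<open>A move is a triple (i, j, c): distinct axes i, j and constants c l in M for l not in {i,j}.\<close>
type_synonym move = "nat \<times> nat \<times> (nat \<Rightarrow> nat)"

definition valid_move :: "nat \<Rightarrow> nat \<Rightarrow> move \<Rightarrow> bool" where
  "valid_move k n mv = (case mv of (i, j, c) \<Rightarrow>
     i < n \<and> j < n \<and> i \<noteq> j \<and> (\<forall>l<n. l \<notin> {i, j} \<longrightarrow> c l < k))"

definition apply_move :: "nat \<Rightarrow> nat \<Rightarrow> move \<Rightarrow> (nat \<Rightarrow> nat) \<Rightarrow> (nat \<Rightarrow> nat)" where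
  "apply_move k n mv p = (case mv of (i, j, c) \<Rightarrow>
     if (\<forall>l<n. l \<notin> {i, j} \<longrightarrow> p l = c l) then psi k i j p else p)"

definition apply_comb :: "nat \<Rightarrow> nat \<Rightarrow> move list \<Rightarrow> (nat \<Rightarrow> nat) \<Rightarrow> (nat \<Rightarrow> nat)" where
  "apply_comb k n ms p = foldl (\<lambda>q mv. apply_move k n mv q) p ms"

definition orbit :: "nat \<Rightarrow> nat \<Rightarrow> (nat \<Rightarrow> nat) \<Rightarrow> (nat \<Rightarrow> nat) set" where
  "orbit k n p = {apply_comb k n ms p | ms. \<forall>mv \<in> set ms. valid_move k n mv}"

definition conn_classes :: "nat \<Rightarrow> nat \<Rightarrow> (nat \<Rightarrow> nat) set set" where
  "conn_classes k n = {orbit k n p | p. p \<in> positions k n \<and> external k n p}"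

definition central :: "nat \<Rightarrow> nat \<Rightarrow> (nat \<Rightarrow> nat) set \<Rightarrow> bool" where
  "central k n A \<longleftrightarrow> (\<forall>p\<in>A. \<forall>x \<in> set (characteristics k n p). real x = (real k - 1) / 2)"

text \<open>Points of R^n are functions nat => real (only coordinates < n matter).
  A t-face of the big cube [0,k]^n is given by a set S of n - t fixed coordinates with
  values in {0,k}; a t-face of the cubie at p by a set T of n - t fixed coordinates with
  values in {p_s, p_s + 1}. Colors are identified with the faces of the big cube
  themselves (distinct faces get distinct colors).\<close>

definition bigface :: "nat \<Rightarrow> nat \<Rightarrow> nat set \<Rightarrow> (nat \<Rightarrow> real) \<Rightarrow> (nat \<Rightarrow> real) set" where
  "bigface k n S e = {x. (\<forall>i<n. 0 \<le> x i \<and> x i \<le> real k) \<and> (\<forall>s\<in>S. x s = e s)}"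

definition bigfaces :: "nat \<Rightarrow> nat \<Rightarrow> nat \<Rightarrow> (nat \<Rightarrow> real) set set" where
  "bigfaces k n t = {bigface k n S e | S e. S \<subseteq> {0..<n} \<and> card S = n - t \<and>
                        (\<forall>s\<in>S. e s = 0 \<or> e s = real k)}"

definition cubieface :: "nat \<Rightarrow> (nat \<Rightarrow> nat) \<Rightarrow> nat set \<Rightarrow> (nat \<Rightarrow> real) \<Rightarrow> (nat \<Rightarrow> real) set" where
  "cubieface n p T f = {x. (\<forall>i<n. i \<notin> T \<longrightarrow> real (p i) \<le> x i \<and> x i \<le> real (p i) + 1)
                          \<and> (\<forall>s\<in>T. x s = f s)}"

definition cubiefaces :: "nat \<Rightarrow> (nat \<Rightarrow> nat) \<Rightarrow> nat \<Rightarrow> (nat \<Rightarrow> real) set set" where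
  "cubiefaces n p t = {cubieface n p T f | T f. T \<subseteq> {0..<n} \<and> card T = n - t \<and>
                        (\<forall>s\<in>T. f s = real (p s) \<or> f s = real (p s) + 1)}"

definition coloring :: "nat \<Rightarrow> nat \<Rightarrow> (nat \<Rightarrow> nat) \<Rightarrow> (nat \<Rightarrow> real) set set" where
  "coloring k n p = {F. \<exists>t. 2 \<le> t \<and> t \<le> n - 1 \<and> F \<in> bigfaces k n t \<and>
                          (\<exists>G \<in> cubiefaces n p t. G \<subseteq> F)}"

definition Cl :: "nat \<Rightarrow> nat \<Rightarrow> (nat \<Rightarrow> nat) set \<Rightarrow> nat set \<Rightarrow> (nat \<Rightarrow> nat) \<Rightarrow> (nat \<Rightarrow> nat) set" where
  "Cl k n A S \<epsilon> = {p \<in> A. B k n p = S \<and> (\<forall>s\<in>S. p s = \<epsilon> s)}"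

definition admissible :: "nat \<Rightarrow> nat \<Rightarrow> nat \<Rightarrow> nat set \<Rightarrow> (nat \<Rightarrow> nat) \<Rightarrow> bool" where
  "admissible k n m S \<epsilon> \<longleftrightarrow> S \<subseteq> {0..<n} \<and> card S = m \<and> (\<forall>s\<in>S. \<epsilon> s = 0 \<or> \<epsilon> s = k - 1)"

end

theory Submission
  imports Defs
begin

text \<open>A face x_S = e_S (e_s in {0, k}) of the big cube of dimension 2 .. n - 1 is a color of the
  cubie at p iff p_s = 0 where e_s = 0 and p_s = k - 1 where e_s = k. Hence the coloring depends only
  on B(p) and on p restricted to B(p), and it determines them, because for n >= 3 the facets
  (t = n - 1) are among the colored faces.

  Whether some interior coordinate of p is off the centre (2 p_i <> k - 1) is invariant under every
  psi, hence a property of the class. If it holds, reflecting that coordinate x to k - 1 - x changes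
  the position but not its boundary data. The reflection is a composition of moves, since psi applied
  twice reflects two coordinates at once: the partner is a second interior coordinate if there is one,
  and otherwise two boundary coordinates are used (again n >= 3). If it fails, every interior
  coordinate equals (k - 1)/2 and the boundary data determine the position.\<close>

lemma positions_finite: "finite (positions k n)"
proof (rule finite_subset)
  show "positions k n \<subseteq> {f. \<forall>x. (x \<in> {0..<n} \<longrightarrow> f x \<in> {0..<k}) \<and> (x \<notin> {0..<n} \<longrightarrow> f x = 0)}"
    unfolding positions_def by (simp add: subset_iff not_less)
qed (intro finite_set_of_finite_funs finite_atLeastLessThan)

lemma psi_mem_positions:
  assumes "p \<in> positions k n" "i < n" "j < n" "k \<ge> 1"
  shows "psi k i j p \<in> positions k n"
  using assms unfolding positions_def psi_def by auto

definition psi_closed :: "nat \<Rightarrow> nat \<Rightarrow> (nat \<Rightarrow> nat) set \<Rightarrow> bool" where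
  "psi_closed k n X \<longleftrightarrow> (\<forall>q\<in>X. \<forall>i<n. \<forall>j<n. i \<noteq> j \<longrightarrow> psi k i j q \<in> X)"

lemma orbit_subset_psi_closed:
  assumes "p \<in> X" "psi_closed k n X"
  shows "orbit k n p \<subseteq> X"
proof
  fix q assume "q \<in> orbit k n p"
  then obtain ms where q: "q = apply_comb k n ms p" and ms: "\<forall>mv\<in>set ms. valid_move k n mv"
    unfolding orbit_def by blast
  have "apply_comb k n ms p \<in> X" using ms \<open>p \<in> X\<close>
  proof (induction ms arbitrary: p)
    case Nil
    then show ?case by (simp add: apply_comb_def)
  next
    case (Cons mv ms)
    have "apply_move k n mv p \<in> X"
      using Cons.prems \<open>psi_closed k n X\<close>
      unfolding valid_move_def apply_move_def psi_closed_def by (auto split: prod.splits)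
    then show ?case using Cons by (simp add: apply_comb_def)
  qed
  then show "q \<in> X" using q by simp
qed

lemma self_mem_orbit: "p \<in> orbit k n p"
  unfolding orbit_def by (rule CollectI, rule exI[of _ "[]"]) (simp add: apply_comb_def)

lemma psi_closed_positions: "k \<ge> 1 \<Longrightarrow> psi_closed k n (positions k n)"
  unfolding psi_closed_def using psi_mem_positions by blast

lemma orbit_subset_positions: "p \<in> positions k n \<Longrightarrow> k \<ge> 1 \<Longrightarrow> orbit k n p \<subseteq> positions k n"
  using orbit_subset_psi_closed psi_closed_positions by blast

text \<open>The move fixing all coordinates except i and j at their values in q sends q to psi k i j q.\<close>
lemma psi_closed_orbit:
  assumes "p \<in> positions k n" "k \<ge> 1"
  shows "psi_closed k n (orbit k n p)"
  unfolding psi_closed_def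
proof (intro ballI allI impI)
  fix q i j assume q: "q \<in> orbit k n p" and ij: "i < n" "j < n" "i \<noteq> j"
  obtain ms where ms: "q = apply_comb k n ms p" "\<forall>mv\<in>set ms. valid_move k n mv"
    using q unfolding orbit_def by blast
  have "q \<in> positions k n" using q orbit_subset_positions assms by blast
  then have "valid_move k n (i, j, q)" using ij unfolding valid_move_def positions_def by auto
  moreover have "psi k i j q = apply_comb k n (ms @ [(i, j, q)]) p"
    using ms by (simp add: apply_comb_def apply_move_def)
  moreover have "\<forall>mv\<in>set (ms @ [(i, j, q)]). valid_move k n mv" using ms calculation by auto
  ultimately show "psi k i j q \<in> orbit k n p" unfolding orbit_def by blast
qed

lemma conn_class_subset_positions: "A \<in> conn_classes k n \<Longrightarrow> k \<ge> 1 \<Longrightarrow> A \<subseteq> positions k n"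
  unfolding conn_classes_def using orbit_subset_positions by blast

lemma psi_closed_conn_class: "A \<in> conn_classes k n \<Longrightarrow> k \<ge> 1 \<Longrightarrow> psi_closed k n A"
  unfolding conn_classes_def using psi_closed_orbit by blast

definition off_centre :: "nat \<Rightarrow> nat \<Rightarrow> bool" where
  "off_centre k x \<longleftrightarrow> x \<noteq> 0 \<and> x \<noteq> k - 1 \<and> 2 * x \<noteq> k - 1"

definition has_off_centre :: "nat \<Rightarrow> nat \<Rightarrow> (nat \<Rightarrow> nat) \<Rightarrow> bool" where
  "has_off_centre k n p \<longleftrightarrow> (\<exists>l<n. off_centre k (p l))"

lemma off_centre_reflect: "x < k \<Longrightarrow> off_centre k (k - 1 - x) \<longleftrightarrow> off_centre k x"
  unfolding off_centre_def by arith

lemma has_off_centre_psi: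
  assumes "p \<in> positions k n" "i < n" "j < n" "i \<noteq> j"
  shows "has_off_centre k n (psi k i j p) \<longleftrightarrow> has_off_centre k n p"
proof -
  have at_i: "psi k i j p i = k - 1 - p j" and at_j: "psi k i j p j = p i"
    and elsewhere: "\<And>l. l \<noteq> i \<Longrightarrow> l \<noteq> j \<Longrightarrow> psi k i j p l = p l"
    using assms(4) unfolding psi_def by simp_all
  have "p j < k" using assms unfolding positions_def by auto
  then have reflect: "off_centre k (psi k i j p i) \<longleftrightarrow> off_centre k (p j)"
    unfolding at_i by (rule off_centre_reflect)
  show ?thesis
  proof
    assume "has_off_centre k n (psi k i j p)"
    then obtain l where "l < n" "off_centre k (psi k i j p l)"
      unfolding has_off_centre_def by blast
    then show "has_off_centre k n p"
      unfolding has_off_centre_def using assms(2,3) reflect at_j elsewhere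
      by (cases "l = i"; cases "l = j") auto
  next
    assume "has_off_centre k n p"
    then obtain l where "l < n" "off_centre k (p l)"
      unfolding has_off_centre_def by blast
    then show "has_off_centre k n (psi k i j p)"
      unfolding has_off_centre_def using assms(2,3) reflect at_j elsewhere
      by (cases "l = i"; cases "l = j") (auto intro: exI[of _ i] exI[of _ j] exI[of _ l])
  qed
qed

lemma has_off_centre_conn_class:
  assumes "A \<in> conn_classes k n" "k \<ge> 1" "p \<in> A" "q \<in> A"
  shows "has_off_centre k n q \<longleftrightarrow> has_off_centre k n p"
proof -
  obtain p0 where A: "A = orbit k n p0" and p0: "p0 \<in> positions k n"
    using assms(1) unfolding conn_classes_def by blast
  define X where "X = {r \<in> positions k n. has_off_centre k n r \<longleftrightarrow> has_off_centre k n p0}"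
  have "psi k i j r \<in> X" if "r \<in> X" "i < n" "j < n" "i \<noteq> j" for r i j
    using that has_off_centre_psi[of r k n i j] psi_mem_positions[of r k n i j] assms(2)
    unfolding X_def by simp
  then have "psi_closed k n X" unfolding psi_closed_def by blast
  moreover have "p0 \<in> X" using p0 unfolding X_def by simp
  ultimately have "A \<subseteq> X" unfolding A by (rule orbit_subset_psi_closed[rotated])
  then show ?thesis using assms(3,4) unfolding X_def by blast
qed

lemma real_bar_eq_centre_iff:
  assumes "x < k"
  shows "real (bar k x) = (real k - 1) / 2 \<longleftrightarrow> 2 * x = k - 1"
proof -
  have "real (bar k x) = (real k - 1) / 2 \<longleftrightarrow> real (2 * bar k x) = real (k - 1)"
    using assms by (simp add: of_nat_diff mult.commute)
  also have "\<dots> \<longleftrightarrow> 2 * x = k - 1"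
    unfolding of_nat_eq_iff bar_def using assms by (simp add: min_def, arith)
  finally show ?thesis .
qed

lemma central_iff_not_has_off_centre:
  assumes "A \<subseteq> positions k n"
  shows "central k n A \<longleftrightarrow> (\<forall>p\<in>A. \<not> has_off_centre k n p)"
proof -
  have "set (characteristics k n p) = (\<lambda>l. bar k (p l)) ` {l. l < n \<and> p l \<noteq> 0 \<and> p l \<noteq> k - 1}"
    for p unfolding characteristics_def B_def by auto
  then have "central k n A \<longleftrightarrow>
      (\<forall>p\<in>A. \<forall>l<n. p l \<noteq> 0 \<and> p l \<noteq> k - 1 \<longrightarrow> real (bar k (p l)) = (real k - 1) / 2)"
    unfolding central_def by (simp add: imp_conjL)
  also have "\<dots> \<longleftrightarrow> (\<forall>p\<in>A. \<forall>l<n. p l \<noteq> 0 \<and> p l \<noteq> k - 1 \<longrightarrow> 2 * p l = k - 1)"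
    using assms real_bar_eq_centre_iff unfolding positions_def by blast
  finally show ?thesis unfolding has_off_centre_def off_centre_def by blast
qed

lemma bigface_subset_imp:
  assumes "k > 0" "\<forall>s\<in>S. e s = 0 \<or> e s = real k" "\<forall>s\<in>S'. e' s = 0 \<or> e' s = real k"
    and "bigface k n S e \<subseteq> bigface k n S' e'"
  shows "S' \<subseteq> S \<and> (\<forall>s\<in>S'. e' s = e s)"
proof -
  have "s \<in> S \<and> e' s = e s" if s: "s \<in> S'" for s
  proof -
    define x where "x = (\<lambda>i. if i \<in> S then e i else if i = s then real k - e' s else 0)"
    have "x \<in> bigface k n S e"
      unfolding bigface_def x_def using assms(1-3) s by auto
    then have "x s = e' s" using assms(4) s unfolding bigface_def by blast
    then show ?thesis using assms(1,3) s unfolding x_def by (auto split: if_splits)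
  qed
  then show ?thesis by blast
qed

lemma cubieface_subset_bigface_imp:
  assumes "cubieface n p T f \<subseteq> bigface k n S e"
  shows "S \<subseteq> T \<and> (\<forall>s\<in>S. f s = e s)"
proof -
  have "s \<in> T \<and> f s = e s" if s: "s \<in> S" for s
  proof -
    define x where "x = (\<lambda>c i. if i \<in> T then f i else if i = s then c else real (p i))"
    have "x (real (p s)) \<in> cubieface n p T f" "x (real (p s) + 1) \<in> cubieface n p T f"
      unfolding cubieface_def x_def by auto
    then have "x (real (p s)) s = e s" "x (real (p s) + 1) s = e s"
      using assms s unfolding bigface_def by blast+
    then show ?thesis unfolding x_def by (auto split: if_splits)
  qed
  then show ?thesis by blast
qed

definition cubie_in_face :: "nat \<Rightarrow> (nat \<Rightarrow> nat) \<Rightarrow> nat set \<Rightarrow> (nat \<Rightarrow> real) \<Rightarrow> bool" where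
  "cubie_in_face k p S e \<longleftrightarrow> (\<forall>s\<in>S. (e s = 0 \<and> p s = 0) \<or> (e s = real k \<and> p s = k - 1))"

lemma cubieface_subset_bigface:
  assumes "p \<in> positions k n" "k \<ge> 1" "cubie_in_face k p S e"
  shows "cubieface n p S e \<subseteq> bigface k n S e"
proof
  fix x assume x: "x \<in> cubieface n p S e"
  have "0 \<le> x i \<and> x i \<le> real k" if "i < n" for i
  proof (cases "i \<in> S")
    case True
    then show ?thesis using x assms(3) unfolding cubieface_def cubie_in_face_def by auto
  next
    case False
    have "real (p i) + 1 \<le> real k" using assms(1) \<open>i < n\<close> unfolding positions_def by auto
    then show ?thesis using x \<open>i < n\<close> False unfolding cubieface_def by force
  qed
  then show "x \<in> bigface k n S e" using x unfolding cubieface_def bigface_def by auto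
qed

lemma cubieface_subset_bigface_same_dim:
  assumes "p \<in> positions k n" "T \<subseteq> {0..<n}" "card S = card T"
    and "\<forall>s\<in>T. f s = real (p s) \<or> f s = real (p s) + 1" "\<forall>s\<in>S. e s = 0 \<or> e s = real k"
    and "cubieface n p T f \<subseteq> bigface k n S e"
  shows "S = T \<and> cubie_in_face k p S e"
proof -
  have "S \<subseteq> T" and fe: "\<forall>s\<in>S. f s = e s"
    using cubieface_subset_bigface_imp assms(6) by blast+
  moreover have "finite T" using assms(2) finite_subset by blast
  ultimately have "S = T" using assms(3) card_subset_eq by metis
  have "cubie_in_face k p S e"
    unfolding cubie_in_face_def
  proof
    fix s assume "s \<in> S"
    then have "p s < k" "e s = real (p s) \<or> e s = real (p s) + 1" "e s = 0 \<or> e s = real k"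
      using assms(1,2,4,5) fe \<open>S = T\<close> unfolding positions_def by auto
    then show "(e s = 0 \<and> p s = 0) \<or> (e s = real k \<and> p s = k - 1)" by (auto simp: of_nat_diff)
  qed
  with \<open>S = T\<close> show ?thesis by blast
qed

lemma mem_coloring_iff:
  assumes "p \<in> positions k n" "k \<ge> 1"
  shows "F \<in> coloring k n p \<longleftrightarrow> (\<exists>t S e. 2 \<le> t \<and> t \<le> n - 1 \<and> S \<subseteq> {0..<n} \<and> card S = n - t
      \<and> (\<forall>s\<in>S. e s = 0 \<or> e s = real k) \<and> F = bigface k n S e \<and> cubie_in_face k p S e)"
proof
  assume "F \<in> coloring k n p"
  then obtain t where t: "2 \<le> t" "t \<le> n - 1" "F \<in> bigfaces k n t" "\<exists>G \<in> cubiefaces n p t. G \<subseteq> F"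
    unfolding coloring_def by blast
  obtain S e where S: "F = bigface k n S e" "S \<subseteq> {0..<n}" "card S = n - t"
    and e: "\<forall>s\<in>S. e s = 0 \<or> e s = real k"
    using t(3) unfolding bigfaces_def by blast
  obtain T f where T: "cubieface n p T f \<subseteq> F" "T \<subseteq> {0..<n}" "card T = n - t"
    and f: "\<forall>s\<in>T. f s = real (p s) \<or> f s = real (p s) + 1"
    using t(4) unfolding cubiefaces_def by blast
  have "card S = card T" using S(3) T(3) by simp
  then have "cubie_in_face k p S e"
    using cubieface_subset_bigface_same_dim[OF assms(1) T(2) _ f e] S(1) T(1) by blast
  then show "\<exists>t S e. 2 \<le> t \<and> t \<le> n - 1 \<and> S \<subseteq> {0..<n} \<and> card S = n - t
      \<and> (\<forall>s\<in>S. e s = 0 \<or> e s = real k) \<and> F = bigface k n S e \<and> cubie_in_face k p S e"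
    using t(1,2) S e by blast
next
  assume "\<exists>t S e. 2 \<le> t \<and> t \<le> n - 1 \<and> S \<subseteq> {0..<n} \<and> card S = n - t
      \<and> (\<forall>s\<in>S. e s = 0 \<or> e s = real k) \<and> F = bigface k n S e \<and> cubie_in_face k p S e"
  then obtain t S e where t: "2 \<le> t" "t \<le> n - 1" and S: "S \<subseteq> {0..<n}" "card S = n - t"
    and e: "\<forall>s\<in>S. e s = 0 \<or> e s = real k" and F: "F = bigface k n S e"
    and c: "cubie_in_face k p S e" by blast
  have "F \<in> bigfaces k n t" using S e F unfolding bigfaces_def by blast
  moreover have "\<forall>s\<in>S. e s = real (p s) \<or> e s = real (p s) + 1"
    using c assms(2) unfolding cubie_in_face_def by (auto simp: of_nat_diff)
  then have "cubieface n p S e \<in> cubiefaces n p t" using S unfolding cubiefaces_def by blast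
  ultimately show "F \<in> coloring k n p"
    using t F cubieface_subset_bigface[OF assms c] unfolding coloring_def by blast
qed

lemma facet_mem_coloring_iff:
  assumes "p \<in> positions k n" "k \<ge> 1" "n \<ge> 3" "s < n" "e s = 0 \<or> e s = real k"
  shows "bigface k n {s} e \<in> coloring k n p \<longleftrightarrow> cubie_in_face k p {s} e"
proof
  assume "bigface k n {s} e \<in> coloring k n p"
  then obtain S e' where e': "\<forall>s\<in>S. e' s = 0 \<or> e' s = real k"
    and eq: "bigface k n {s} e = bigface k n S e'" and c: "cubie_in_face k p S e'"
    unfolding mem_coloring_iff[OF assms(1,2)] by blast
  have "S \<subseteq> {s}" "e' s = e s" if "s \<in> S"
    using bigface_subset_imp[of k "{s}" e S e' n] assms(2,5) e' eq that by auto
  moreover have "{s} \<subseteq> S"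
    using bigface_subset_imp[of k S e' "{s}" e n] assms(2,5) e' eq by auto
  ultimately show "cubie_in_face k p {s} e"
    using c unfolding cubie_in_face_def by auto
next
  assume "cubie_in_face k p {s} e"
  moreover have "2 \<le> n - 1" "{s} \<subseteq> {0..<n}" "card {s} = n - (n - 1)"
    using assms(3,4) by auto
  ultimately show "bigface k n {s} e \<in> coloring k n p"
    unfolding mem_coloring_iff[OF assms(1,2)] using assms(5) by blast
qed

definition same_boundary :: "nat \<Rightarrow> nat \<Rightarrow> (nat \<Rightarrow> nat) \<Rightarrow> (nat \<Rightarrow> nat) \<Rightarrow> bool" where
  "same_boundary k n p q \<longleftrightarrow> B k n q = B k n p \<and> (\<forall>s\<in>B k n p. q s = p s)"

lemma cubie_in_face_cong:
  assumes "same_boundary k n p q" "S \<subseteq> {0..<n}"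
  shows "cubie_in_face k q S e \<longleftrightarrow> cubie_in_face k p S e"
proof -
  have "(e s = 0 \<and> q s = 0) \<or> (e s = real k \<and> q s = k - 1) \<longleftrightarrow>
      (e s = 0 \<and> p s = 0) \<or> (e s = real k \<and> p s = k - 1)" if "s \<in> S" for s
  proof (cases "s \<in> B k n p \<or> s \<in> B k n q")
    case True
    then have "q s = p s" using assms(1) unfolding same_boundary_def by auto
    then show ?thesis by simp
  next
    case False
    then show ?thesis using that assms(2) unfolding B_def by auto
  qed
  then show ?thesis unfolding cubie_in_face_def by blast
qed

lemma coloring_eq_imp_boundary_value:
  assumes "p \<in> positions k n" "q \<in> positions k n" "k \<ge> 2" "n \<ge> 3"
    and "coloring k n p = coloring k n q" "s \<in> B k n p"
  shows "s \<in> B k n q \<and> q s = p s"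
proof -
  define e where "e = (\<lambda>_::nat. if p s = 0 then 0 else real k)"
  have s: "s < n" "p s = 0 \<or> p s = k - 1" using assms(6) unfolding B_def by auto
  then have "cubie_in_face k p {s} e" unfolding cubie_in_face_def e_def by auto
  then have "cubie_in_face k q {s} e"
    using facet_mem_coloring_iff[OF assms(1) _ assms(4) s(1)] facet_mem_coloring_iff[OF assms(2) _ assms(4) s(1)]
      assms(3,5) unfolding e_def by simp
  then have "q s = p s" using s(2) assms(3) unfolding cubie_in_face_def e_def by (auto split: if_splits)
  then show ?thesis using s unfolding B_def by auto
qed

lemma coloring_eq_iff_same_boundary:
  assumes "p \<in> positions k n" "q \<in> positions k n" "k \<ge> 2" "n \<ge> 3"
  shows "coloring k n p = coloring k n q \<longleftrightarrow> same_boundary k n p q"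
proof
  assume "coloring k n p = coloring k n q"
  then show "same_boundary k n p q"
    using coloring_eq_imp_boundary_value[OF assms] coloring_eq_imp_boundary_value[OF assms(2,1,3,4)]
    unfolding same_boundary_def by blast
next
  assume same: "same_boundary k n p q"
  have "k \<ge> 1" using assms(3) by simp
  show "coloring k n p = coloring k n q"
  proof (rule set_eqI)
    fix F
    show "F \<in> coloring k n p \<longleftrightarrow> F \<in> coloring k n q"
      unfolding mem_coloring_iff[OF assms(1) \<open>k \<ge> 1\<close>] mem_coloring_iff[OF assms(2) \<open>k \<ge> 1\<close>]
      using cubie_in_face_cong[OF same] by blast
  qed
qed

definition reflect_coords :: "nat \<Rightarrow> nat set \<Rightarrow> (nat \<Rightarrow> nat) \<Rightarrow> (nat \<Rightarrow> nat)" where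
  "reflect_coords k R p = (\<lambda>i. if i \<in> R then k - 1 - p i else p i)"

lemma psi_psi: "i \<noteq> j \<Longrightarrow> psi k i j (psi k i j p) = reflect_coords k {i, j} p"
  unfolding psi_def reflect_coords_def by (auto simp: fun_eq_iff)

lemma reflect_pair_mem:
  assumes "psi_closed k n X" "p \<in> X" "i < n" "j < n" "i \<noteq> j"
  shows "reflect_coords k {i, j} p \<in> X"
  using assms psi_psi[OF assms(5)] unfolding psi_closed_def by metis

text \<open>A single coordinate l can be reflected using two further coordinates s, t on the boundary:
  reflect l together with s, then restore s by a quarter turn in the (s, t)-plane.\<close>
lemma reflect_single_mem:
  assumes "psi_closed k n X" "X \<subseteq> positions k n" "p \<in> X"
    and "l < n" "s < n" "t < n" "l \<noteq> s" "l \<noteq> t" "s \<noteq> t"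
    and "p s = 0 \<or> p s = k - 1" "p t = 0 \<or> p t = k - 1"
  shows "reflect_coords k {l} p \<in> X"
proof -
  let ?q = "reflect_coords k {l, s} p"
  have q: "?q \<in> X" using reflect_pair_mem assms(1,3,4,5,7) .
  have "p s < k" "p t < k" using assms(2,3,5,6) unfolding positions_def by auto
  show ?thesis
  proof (cases "p s = p t")
    case True
    then have "psi k t s ?q = reflect_coords k {l} p"
      using assms(7-9) \<open>p s < k\<close> unfolding psi_def reflect_coords_def by (auto simp: fun_eq_iff)
    then show ?thesis using q assms(1,5,6,9) unfolding psi_closed_def by metis
  next
    case False
    then have "psi k s t ?q = reflect_coords k {l} p"
      using assms(7-11) \<open>p s < k\<close> \<open>p t < k\<close> unfolding psi_def reflect_coords_def
      by (auto simp: fun_eq_iff)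
    then show ?thesis using q assms(1,5,6,9) unfolding psi_closed_def by metis
  qed
qed

lemma B_reflect_coords: "p \<in> positions k n \<Longrightarrow> B k n (reflect_coords k R p) = B k n p"
  unfolding B_def reflect_coords_def positions_def by auto

lemma has_off_centre_imp_ex_same_boundary:
  assumes "psi_closed k n X" "X \<subseteq> positions k n" "n \<ge> 3"
    and "p \<in> X" "B k n p \<noteq> {}" "has_off_centre k n p"
  shows "\<exists>q\<in>X. q \<noteq> p \<and> same_boundary k n p q"
proof -
  obtain l where l: "l < n" "off_centre k (p l)" using assms(6) unfolding has_off_centre_def by blast
  then have "l \<notin> B k n p" unfolding B_def off_centre_def by auto
  obtain R where R: "l \<in> R" "R \<inter> B k n p = {}" "reflect_coords k R p \<in> X"
  proof (cases "\<exists>t<n. t \<noteq> l \<and> t \<notin> B k n p")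
    case True
    then obtain t where "t < n" "t \<noteq> l" "t \<notin> B k n p" by blast
    then show ?thesis
      using that[of "{l, t}"] reflect_pair_mem[OF assms(1,4) l(1)] \<open>l \<notin> B k n p\<close> by auto
  next
    case False
    obtain s where s: "s \<in> B k n p" using assms(5) by blast
    obtain t where t: "t < n" "t \<noteq> l" "t \<noteq> s"
    proof -
      have "\<exists>t\<in>{0, 1, 2::nat}. t \<noteq> l \<and> t \<noteq> s" by auto
      then obtain t where "t \<in> {0, 1, 2}" "t \<noteq> l" "t \<noteq> s" by blast
      moreover from this have "t < n" using assms(3) by auto
      ultimately show ?thesis using that by blast
    qed
    then have "t \<in> B k n p" using False by blast
    then have "s < n" "l \<noteq> s" "p s = 0 \<or> p s = k - 1" "p t = 0 \<or> p t = k - 1"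
      using s \<open>l \<notin> B k n p\<close> unfolding B_def by auto
    then have "reflect_coords k {l} p \<in> X"
      using reflect_single_mem[OF assms(1,2,4) l(1) _ t(1)] t(2,3) by auto
    then show ?thesis using that[of "{l}"] \<open>l \<notin> B k n p\<close> by auto
  qed
  let ?q = "reflect_coords k R p"
  have "?q l \<noteq> p l" using R(1) l(2) unfolding reflect_coords_def off_centre_def by auto
  moreover have "same_boundary k n p ?q"
    using B_reflect_coords[of p k n R] assms(2,4) R(2) unfolding same_boundary_def reflect_coords_def
    by auto
  ultimately show ?thesis using R(3) by metis
qed

lemma same_boundary_centred_eq:
  assumes "p \<in> positions k n" "q \<in> positions k n"
    and "\<not> has_off_centre k n p" "\<not> has_off_centre k n q" "same_boundary k n p q"
  shows "q = p"
proof
  fix i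
  show "q i = p i"
  proof (cases "i < n")
    case False
    then show ?thesis using assms(1,2) unfolding positions_def by auto
  next
    case True
    show ?thesis
    proof (cases "i \<in> B k n p")
      case True
      then show ?thesis using assms(5) unfolding same_boundary_def by auto
    next
      case False
      then have "i \<notin> B k n q" using assms(5) unfolding same_boundary_def by auto
      then have "2 * q i = k - 1" "2 * p i = k - 1"
        using False \<open>i < n\<close> assms(3,4) unfolding has_off_centre_def off_centre_def B_def by auto
      then show ?thesis by simp
    qed
  qed
qed

lemma conn_class_boundary_nonempty:
  assumes "A \<in> conn_classes k n" "\<forall>p\<in>A. card (B k n p) = m" "p \<in> A"
  shows "B k n p \<noteq> {}"
proof -
  obtain p0 where "p0 \<in> A" "external k n p0"
    using assms(1) self_mem_orbit unfolding conn_classes_def by blast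
  moreover have "finite (B k n p0)" unfolding B_def by simp
  ultimately have "m \<noteq> 0" using assms(2) unfolding external_def by auto
  then show ?thesis using assms(2,3) by force
qed

lemma Cl_subset: "Cl k n A S \<epsilon> \<subseteq> A"
  unfolding Cl_def by blast

lemma Cl_eq_same_boundary: "p \<in> Cl k n A S \<epsilon> \<Longrightarrow> Cl k n A S \<epsilon> = {q \<in> A. same_boundary k n p q}"
  unfolding Cl_def same_boundary_def by auto

lemma self_mem_Cl_B: "p \<in> A \<Longrightarrow> p \<in> Cl k n A (B k n p) p"
  unfolding Cl_def by simp

lemma admissible_B: "card (B k n p) = m \<Longrightarrow> admissible k n m (B k n p) p"
  unfolding admissible_def B_def by auto

lemma same_boundary_iff_ex_Cl:
  assumes "\<forall>p\<in>A. card (B k n p) = m" "p \<in> A" "q \<in> A"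
  shows "same_boundary k n p q \<longleftrightarrow>
    (\<exists>S \<epsilon>. admissible k n m S \<epsilon> \<and> p \<in> Cl k n A S \<epsilon> \<and> q \<in> Cl k n A S \<epsilon>)"
proof
  assume "same_boundary k n p q"
  then have "q \<in> Cl k n A (B k n p) p"
    using Cl_eq_same_boundary[OF self_mem_Cl_B] assms(2,3) by blast
  then show "\<exists>S \<epsilon>. admissible k n m S \<epsilon> \<and> p \<in> Cl k n A S \<epsilon> \<and> q \<in> Cl k n A S \<epsilon>"
    using admissible_B self_mem_Cl_B assms by blast
next
  assume "\<exists>S \<epsilon>. admissible k n m S \<epsilon> \<and> p \<in> Cl k n A S \<epsilon> \<and> q \<in> Cl k n A S \<epsilon>"
  then show "same_boundary k n p q" using Cl_eq_same_boundary by blast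
qed

lemma coloring_eq_iff_ex_Cl:
  assumes "k \<ge> 2" "n \<ge> 3" "A \<in> conn_classes k n" "\<forall>p\<in>A. card (B k n p) = m"
    and "p \<in> A" "q \<in> A"
  shows "coloring k n p = coloring k n q \<longleftrightarrow>
    (\<exists>S \<epsilon>. admissible k n m S \<epsilon> \<and> p \<in> Cl k n A S \<epsilon> \<and> q \<in> Cl k n A S \<epsilon>)"
proof -
  have "k \<ge> 1" using assms(1) by simp
  then have "A \<subseteq> positions k n" by (rule conn_class_subset_positions[OF assms(3)])
  then have "p \<in> positions k n" "q \<in> positions k n" using assms(5,6) by blast+
  then have "coloring k n p = coloring k n q \<longleftrightarrow> same_boundary k n p q"
    by (rule coloring_eq_iff_same_boundary[OF _ _ assms(1,2)])
  also have "\<dots> \<longleftrightarrow> (\<exists>S \<epsilon>. admissible k n m S \<epsilon> \<and> p \<in> Cl k n A S \<epsilon> \<and> q \<in> Cl k n A S \<epsilon>)"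
    by (rule same_boundary_iff_ex_Cl[OF assms(4-6)])
  finally show ?thesis .
qed

lemma Union_Cl_eq:
  assumes "\<forall>p\<in>A. card (B k n p) = m"
  shows "\<Union>{Cl k n A S \<epsilon> | S \<epsilon>. admissible k n m S \<epsilon>} = A"
proof
  show "A \<subseteq> \<Union>{Cl k n A S \<epsilon> | S \<epsilon>. admissible k n m S \<epsilon>}"
  proof
    fix p assume "p \<in> A"
    then have "admissible k n m (B k n p) p" "p \<in> Cl k n A (B k n p) p"
      using admissible_B self_mem_Cl_B assms by auto
    then show "p \<in> \<Union>{Cl k n A S \<epsilon> | S \<epsilon>. admissible k n m S \<epsilon>}" by blast
  qed
  show "\<Union>{Cl k n A S \<epsilon> | S \<epsilon>. admissible k n m S \<epsilon>} \<subseteq> A"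
    using Cl_subset by blast
qed

lemma Cl_disjoint:
  assumes "Cl k n A S \<epsilon> \<inter> Cl k n A S' \<epsilon>' \<noteq> {}"
  shows "S = S' \<and> (\<forall>s\<in>S. \<epsilon> s = \<epsilon>' s)"
proof -
  obtain p where "p \<in> Cl k n A S \<epsilon>" "p \<in> Cl k n A S' \<epsilon>'" using assms by blast
  then have "B k n p = S" "\<forall>s\<in>S. p s = \<epsilon> s" "B k n p = S'" "\<forall>s\<in>S'. p s = \<epsilon>' s"
    unfolding Cl_def by simp_all
  then show ?thesis by simp
qed

lemma card_Cl_ge_2:
  assumes "A \<in> conn_classes k n" "k \<ge> 1" "n \<ge> 3" "\<forall>p\<in>A. card (B k n p) = m"
    and "\<not> central k n A" "Cl k n A S \<epsilon> \<noteq> {}"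
  shows "finite (Cl k n A S \<epsilon>) \<and> card (Cl k n A S \<epsilon>) \<ge> 2"
proof -
  obtain p where p: "p \<in> Cl k n A S \<epsilon>" using assms(6) by blast
  have A: "A \<subseteq> positions k n" "psi_closed k n A"
    using conn_class_subset_positions psi_closed_conn_class assms(1,2) by blast+
  have "p \<in> A" using p Cl_subset by blast
  obtain p' where "p' \<in> A" "has_off_centre k n p'"
    using assms(5) central_iff_not_has_off_centre[OF A(1)] by blast
  then have "has_off_centre k n p"
    using has_off_centre_conn_class[OF assms(1,2) \<open>p' \<in> A\<close> \<open>p \<in> A\<close>] by simp
  then obtain q where "q \<in> A" "q \<noteq> p" "same_boundary k n p q"
    using has_off_centre_imp_ex_same_boundary[OF A(2,1) assms(3) \<open>p \<in> A\<close>]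
      conn_class_boundary_nonempty[OF assms(1,4) \<open>p \<in> A\<close>] by blast
  then have "{p, q} \<subseteq> Cl k n A S \<epsilon>" using Cl_eq_same_boundary[OF p] p by blast
  moreover have "finite (Cl k n A S \<epsilon>)"
    using Cl_subset A(1) positions_finite by (metis finite_subset)
  ultimately show ?thesis using card_mono[of "Cl k n A S \<epsilon>" "{p, q}"] \<open>q \<noteq> p\<close> by simp
qed

lemma Cl_singleton:
  assumes "A \<in> conn_classes k n" "k \<ge> 1" "central k n A" "Cl k n A S \<epsilon> \<noteq> {}"
  shows "\<exists>p. Cl k n A S \<epsilon> = {p}"
proof -
  obtain p where p: "p \<in> Cl k n A S \<epsilon>" using assms(4) by blast
  have A: "A \<subseteq> positions k n" using conn_class_subset_positions assms(1,2) by blast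
  then have centred: "\<forall>q\<in>A. \<not> has_off_centre k n q"
    using assms(3) central_iff_not_has_off_centre by blast
  have "p \<in> A" using p Cl_subset by blast
  have "q = p" if "q \<in> Cl k n A S \<epsilon>" for q
  proof -
    have "q \<in> A" "same_boundary k n p q" using that Cl_eq_same_boundary[OF p] by blast+
    then show ?thesis using same_boundary_centred_eq A centred \<open>p \<in> A\<close> by blast
  qed
  then show ?thesis using p by blast
qed

theorem mainTheorem3:
  fixes k n m :: nat and A :: "(nat \<Rightarrow> nat) set"
  assumes "k \<ge> 2" and "n \<ge> 3"
    and "A \<in> conn_classes k n"
    and "\<forall>p\<in>A. card (B k n p) = m"
  shows "A = (\<Union>{Cl k n A S \<epsilon> | S \<epsilon>. admissible k n m S \<epsilon>})
    \<and> (\<forall>S \<epsilon> S' \<epsilon>'. admissible k n m S \<epsilon> \<and> admissible k n m S' \<epsilon>' \<and>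
          Cl k n A S \<epsilon> \<inter> Cl k n A S' \<epsilon>' \<noteq> {} \<longrightarrow> S = S' \<and> (\<forall>s\<in>S. \<epsilon> s = \<epsilon>' s))
    \<and> (\<forall>p\<in>A. \<forall>q\<in>A. coloring k n p = coloring k n q \<longleftrightarrow>
          (\<exists>S \<epsilon>. admissible k n m S \<epsilon> \<and> p \<in> Cl k n A S \<epsilon> \<and> q \<in> Cl k n A S \<epsilon>))
    \<and> (\<not> central k n A \<longrightarrow> (\<forall>S \<epsilon>. admissible k n m S \<epsilon> \<and> Cl k n A S \<epsilon> \<noteq> {}
          \<longrightarrow> finite (Cl k n A S \<epsilon>) \<and> card (Cl k n A S \<epsilon>) \<ge> 2))
    \<and> (central k n A \<longrightarrow> (\<forall>S \<epsilon>. admissible k n m S \<epsilon> \<and> Cl k n A S \<epsilon> \<noteq> {}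
          \<longrightarrow> (\<exists>p. Cl k n A S \<epsilon> = {p})))"
proof -
  have "k \<ge> 1" using assms(1) by simp
  then show ?thesis
    using Union_Cl_eq[OF assms(4)] Cl_disjoint coloring_eq_iff_ex_Cl[OF assms]
      card_Cl_ge_2[OF assms(3) _ assms(2,4)] Cl_singleton[OF assms(3)]
    by (intro conjI) blast+
qed

end
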